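(* Let $K$ be a field and let $\lambda_1,\dots,\lambda_n$ be pairwise relatively prime positive integers, $\boldsymbol{\lambda}=(\lambda_1,\dots,\lambda_n)$, and $\Lambda=\langle1/\lambda_1,\dots,1/\lambda_n\rangle$ the additive submonoid of $\mathbb{Q}_{\ge}$ they generate. Then $I(\boldsymbol{\lambda})\subseteq K[x_1,\dots,x_n]$ is normal if and only if $\Lambda$ is quasinormal.
   Context: $I(\boldsymbol{\lambda})$ is the integral closure in $K[x_1,\dots,x_n]$ of $(x_1^{\lambda_1},\dots,x_n^{\lambda_n})$; an ideal is normal if all its positive powers are integrally closed. A submonoid $S$ of $\mathbb{Q}_{\ge}$ is quasinormal if whenever $x\in S$ and $x\ge p$ for a positive integer $p$, there exist $y_1,\dots,y_p\in S$ with $y_i\ge 1$ for all $i$ and $x=y_1+\cdots+y_p$. *)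

theory Defs
  imports Complex_Main "HOL-Library.Poly_Mapping"
begin

type_synonym ('n, 'k) mpoly = "('n \<Rightarrow>\<^sub>0 nat) \<Rightarrow>\<^sub>0 'k"

definition var_power :: "'n \<Rightarrow> nat \<Rightarrow> ('n, 'k::comm_ring_1) mpoly" where
  "var_power v e = Poly_Mapping.single (Poly_Mapping.single v e) 1"

definition is_ideal :: "'a::comm_ring_1 set \<Rightarrow> bool" where
  "is_ideal I \<longleftrightarrow> 0 \<in> I \<and> (\<forall>a\<in>I. \<forall>b\<in>I. a + b \<in> I) \<and> (\<forall>a\<in>I. \<forall>r. r * a \<in> I)"

definition ideal_gen :: "'a::comm_ring_1 set \<Rightarrow> 'a set" where
  "ideal_gen S = \<Inter>{I. is_ideal I \<and> S \<subseteq> I}"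

definition ideal_mult :: "'a::comm_ring_1 set \<Rightarrow> 'a set \<Rightarrow> 'a set" where
  "ideal_mult I J = ideal_gen {a * b | a b. a \<in> I \<and> b \<in> J}"

fun ideal_pow :: "'a::comm_ring_1 set \<Rightarrow> nat \<Rightarrow> 'a set" where
  "ideal_pow I 0 = UNIV"
| "ideal_pow I (Suc k) = ideal_mult I (ideal_pow I k)"

definition integral_over_ideal :: "'a::comm_ring_1 set \<Rightarrow> 'a \<Rightarrow> bool" where
  "integral_over_ideal I r \<longleftrightarrow>
     (\<exists>k\<ge>1. \<exists>a::nat \<Rightarrow> 'a. (\<forall>i\<in>{1..k}. a i \<in> ideal_pow I i) \<and>
        r ^ k + (\<Sum>i=1..k. a i * r ^ (k - i)) = 0)"

definition integral_closure :: "'a::comm_ring_1 set \<Rightarrow> 'a set" where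
  "integral_closure I = {r. integral_over_ideal I r}"

definition integrally_closed :: "'a::comm_ring_1 set \<Rightarrow> bool" where
  "integrally_closed I \<longleftrightarrow> integral_closure I = I"

definition normal_ideal :: "'a::comm_ring_1 set \<Rightarrow> bool" where
  "normal_ideal I \<longleftrightarrow> (\<forall>k\<ge>1. integrally_closed (ideal_pow I k))"

definition I_lambda :: "('n \<Rightarrow> nat) \<Rightarrow> ('n, 'k::comm_ring_1) mpoly set" where
  "I_lambda lam = integral_closure (ideal_gen (range (\<lambda>v. var_power v (lam v))))"

definition Lambda_monoid :: "('n::finite \<Rightarrow> nat) \<Rightarrow> rat set" where
  "Lambda_monoid lam = {(\<Sum>v\<in>UNIV. of_nat (c v) / of_nat (lam v)) | c. True}"

definition quasinormal :: "rat set \<Rightarrow> bool" where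
  "quasinormal S \<longleftrightarrow> (\<forall>x\<in>S. \<forall>p::nat. p \<ge> 1 \<longrightarrow> x \<ge> of_nat p \<longrightarrow>
      (\<exists>y::nat \<Rightarrow> rat. (\<forall>i<p. y i \<in> S \<and> y i \<ge> 1) \<and> x = (\<Sum>i<p. y i)))"

end

theory Submission
  imports Defs "HOL-Number_Theory.Cong"
begin

text \<open>Give the variable x_v the weight 1/\<lambda>_v. The least weight of the monomials of a
  polynomial is a valuation (lowest-weight terms of a product do not cancel), so the polynomials
  all of whose monomials have weight at least k form an integrally closed ideal containing
  I(\<lambda>)^k. Conversely a monomial x^a of weight at least k is integral over I(\<lambda>)^k, since
  (x^a)^L, with L the product of the \<lambda>_v, is a product of k L generators x_v^\<lambda>_v.
  On the other hand x^a lies in I(\<lambda>)^k iff a is a sum of k exponent vectors of weight at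
  least 1 plus a remainder. Hence I(\<lambda>) is normal iff every exponent vector of weight at least k
  splits in this way. When the \<lambda>_v are pairwise coprime, an exponent vector with a_v < \<lambda>_v
  for all v is determined by its weight; this turns the splitting condition into quasinormality
  of \<Lambda>, which is the monoid of all weights.\<close>

section \<open>Powers and integral closure of ideals\<close>

lemma is_ideal_ideal_gen: "is_ideal (ideal_gen S)"
  unfolding is_ideal_def ideal_gen_def by auto

lemma ideal_gen_superset: "S \<subseteq> ideal_gen S"
  unfolding ideal_gen_def by auto

lemma ideal_gen_least: "is_ideal I \<Longrightarrow> S \<subseteq> I \<Longrightarrow> ideal_gen S \<subseteq> I"
  unfolding ideal_gen_def by auto

lemma ideal_gen_mono: "S \<subseteq> T \<Longrightarrow> ideal_gen S \<subseteq> ideal_gen T"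
  unfolding ideal_gen_def by auto

lemma is_ideal_UNIV: "is_ideal UNIV"
  unfolding is_ideal_def by auto

lemma ideal_mult_right_mem: "is_ideal I \<Longrightarrow> a \<in> I \<Longrightarrow> a * r \<in> I"
  unfolding is_ideal_def by (metis mult.commute)

lemma ideal_uminus_mem: "is_ideal I \<Longrightarrow> a \<in> I \<Longrightarrow> - a \<in> I"
  unfolding is_ideal_def by (metis mult_minus1)

lemma ideal_sum_mem: "is_ideal I \<Longrightarrow> (\<And>i. i \<in> F \<Longrightarrow> f i \<in> I) \<Longrightarrow> sum f F \<in> I"
  unfolding is_ideal_def by (induction F rule: infinite_finite_induct) auto

lemma is_ideal_ideal_mult: "is_ideal (ideal_mult I J)"
  unfolding ideal_mult_def by (rule is_ideal_ideal_gen)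

lemma ideal_mult_mem: "a \<in> I \<Longrightarrow> b \<in> J \<Longrightarrow> a * b \<in> ideal_mult I J"
  unfolding ideal_mult_def by (rule subsetD[OF ideal_gen_superset]) blast

lemma ideal_mult_mono: "I \<subseteq> I' \<Longrightarrow> J \<subseteq> J' \<Longrightarrow> ideal_mult I J \<subseteq> ideal_mult I' J'"
  unfolding ideal_mult_def by (intro ideal_gen_mono) blast

lemma ideal_mult_least:
  "is_ideal M \<Longrightarrow> (\<And>a b. a \<in> I \<Longrightarrow> b \<in> J \<Longrightarrow> a * b \<in> M) \<Longrightarrow> ideal_mult I J \<subseteq> M"
  unfolding ideal_mult_def by (rule ideal_gen_least) auto

lemma ideal_mult_assoc_subset:
  "ideal_mult I (ideal_mult J K) \<subseteq> ideal_mult (ideal_mult I J) K"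
proof (rule ideal_mult_least[OF is_ideal_ideal_mult])
  fix a z assume a: "a \<in> I" and z: "z \<in> ideal_mult J K"
  have "is_ideal {z. a * z \<in> ideal_mult (ideal_mult I J) K}"
    using is_ideal_ideal_mult[of "ideal_mult I J" K]
    unfolding is_ideal_def by (auto simp: distrib_left mult.left_commute)
  moreover have "a * (b * c) \<in> ideal_mult (ideal_mult I J) K" if "b \<in> J" "c \<in> K" for b c
    using ideal_mult_mem[OF ideal_mult_mem[OF a \<open>b \<in> J\<close>] \<open>c \<in> K\<close>] by (simp add: mult.assoc)
  ultimately have "ideal_mult J K \<subseteq> {z. a * z \<in> ideal_mult (ideal_mult I J) K}"
    by (intro ideal_mult_least) auto
  with z show "a * z \<in> ideal_mult (ideal_mult I J) K" by blast
qed

lemma is_ideal_ideal_pow: "is_ideal (ideal_pow A k)"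
  by (cases k) (simp_all add: is_ideal_UNIV is_ideal_ideal_mult)

lemma ideal_pow_subset_graded:
  assumes "M 0 = UNIV" and "\<And>k. is_ideal (M k)"
    and "\<And>a b k. a \<in> A \<Longrightarrow> b \<in> M k \<Longrightarrow> a * b \<in> M (Suc k)"
  shows "ideal_pow A k \<subseteq> M k"
proof (induction k)
  case (Suc k)
  have "ideal_pow A (Suc k) \<subseteq> ideal_mult A (M k)"
    using Suc.IH by (simp add: ideal_mult_mono)
  also have "\<dots> \<subseteq> M (Suc k)"
    using assms(2,3) by (rule ideal_mult_least)
  finally show ?case .
qed (simp add: assms(1))

lemma ideal_pow_mult_mem:
  assumes "x \<in> ideal_pow A m" and y: "y \<in> ideal_pow A n"
  shows "x * y \<in> ideal_pow A (m + n)"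
proof -
  have "ideal_pow A m \<subseteq> {x. x * y \<in> ideal_pow A (m + n)}"
  proof (rule ideal_pow_subset_graded[where M = "\<lambda>k. {x. x * y \<in> ideal_pow A (k + n)}"])
    show "{x. x * y \<in> ideal_pow A (0 + n)} = UNIV"
      using ideal_mult_right_mem[OF is_ideal_ideal_pow y] by (auto simp: mult.commute)
    show "is_ideal {x. x * y \<in> ideal_pow A (k + n)}" for k
      using is_ideal_ideal_pow[of A "k + n"] unfolding is_ideal_def
      by (auto simp: distrib_right mult.assoc)
    show "a * b \<in> {x. x * y \<in> ideal_pow A (Suc k + n)}"
      if "a \<in> A" "b \<in> {x. x * y \<in> ideal_pow A (k + n)}" for a b k
      using ideal_mult_mem[of a A "b * y"] that by (simp add: mult.assoc)
  qed
  with assms(1) show ?thesis by blast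
qed

lemma ideal_pow_one_superset: "A \<subseteq> ideal_pow A 1"
  using ideal_mult_mem[of _ A 1 UNIV] by auto

lemma power_mem_ideal_pow: "x \<in> A \<Longrightarrow> x ^ n \<in> ideal_pow A n"
  by (induction n) (simp_all add: ideal_mult_mem)

lemma prod_mem_ideal_pow:
  "finite F \<Longrightarrow> (\<And>i. i \<in> F \<Longrightarrow> g i \<in> ideal_pow A (n i)) \<Longrightarrow> prod g F \<in> ideal_pow A (sum n F)"
  by (induction F rule: finite_induct) (simp_all add: ideal_pow_mult_mem)

lemma ideal_pow_Suc_subset: "ideal_pow A (Suc k) \<subseteq> ideal_pow A k"
proof (induction k)
  case (Suc k)
  then show ?case by (simp add: ideal_mult_mono)
qed simp

lemma ideal_pow_antimono: "m \<le> n \<Longrightarrow> ideal_pow A n \<subseteq> ideal_pow A m"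
  by (induction n rule: dec_induct) (use ideal_pow_Suc_subset in blast)+

lemma ideal_pow_add_subset: "ideal_pow A (i + k) \<subseteq> ideal_mult (ideal_pow A i) (ideal_pow A k)"
proof (induction i)
  case 0
  show ?case
  proof
    fix x assume "x \<in> ideal_pow A (0 + k)"
    then have "1 * x \<in> ideal_mult (ideal_pow A 0) (ideal_pow A k)"
      by (intro ideal_mult_mem) auto
    then show "x \<in> ideal_mult (ideal_pow A 0) (ideal_pow A k)" by simp
  qed
next
  case (Suc i)
  have "ideal_pow A (Suc i + k) \<subseteq> ideal_mult A (ideal_mult (ideal_pow A i) (ideal_pow A k))"
    using Suc.IH by (simp add: ideal_mult_mono)
  also have "\<dots> \<subseteq> ideal_mult (ideal_pow A (Suc i)) (ideal_pow A k)"
    by (simp add: ideal_mult_assoc_subset)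
  finally show ?case .
qed

lemma ideal_pow_mult_subset: "ideal_pow A (m * n) \<subseteq> ideal_pow (ideal_pow A m) n"
proof (induction n)
  case (Suc n)
  have "ideal_pow A (m * Suc n) \<subseteq> ideal_mult (ideal_pow A m) (ideal_pow A (m * n))"
    using ideal_pow_add_subset[of A m "m * n"] by simp
  also have "\<dots> \<subseteq> ideal_pow (ideal_pow A m) (Suc n)"
    using Suc.IH by (simp add: ideal_mult_mono)
  finally show ?case .
qed simp

lemma integral_closure_superset: "A \<subseteq> integral_closure A"
proof
  fix r assume "r \<in> A"
  then have "- r \<in> ideal_pow A 1"
    using ideal_pow_one_superset ideal_uminus_mem[OF is_ideal_ideal_pow] by blast
  then show "r \<in> integral_closure A"
    unfolding integral_closure_def integral_over_ideal_def
    by (intro CollectI exI[of _ 1] conjI exI[of _ "\<lambda>_. - r"]) auto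
qed

lemma integral_over_ideal_if_power_mem:
  assumes "N \<ge> 1" and "r ^ N \<in> ideal_pow A N"
  shows "integral_over_ideal A r"
proof -
  define a where "a i = (if i = N then - (r ^ N) else 0)" for i
  have "\<forall>i\<in>{1..N}. a i \<in> ideal_pow A i"
    using assms(2) is_ideal_ideal_pow by (auto simp: a_def is_ideal_def ideal_uminus_mem)
  moreover have "(\<Sum>i=1..N. a i * r ^ (N - i)) = (\<Sum>i=1..N. if i = N then - (r ^ N) else 0)"
    by (rule sum.cong) (auto simp: a_def)
  then have "r ^ N + (\<Sum>i=1..N. a i * r ^ (N - i)) = 0"
    using assms(1) by simp
  ultimately show ?thesis
    unfolding integral_over_ideal_def using assms(1) by blast
qed

section \<open>Monomials\<close>

lemma lookup_mult_unique_decomposition: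
  fixes f g :: "'a::cancel_comm_monoid_add \<Rightarrow>\<^sub>0 'b::comm_ring_1"
  assumes unique: "\<And>a b. a \<in> Poly_Mapping.keys f \<Longrightarrow> b \<in> Poly_Mapping.keys g \<Longrightarrow> a + b = a0 + b0 \<Longrightarrow> a = a0 \<and> b = b0"
  shows "Poly_Mapping.lookup (f * g) (a0 + b0) = Poly_Mapping.lookup f a0 * Poly_Mapping.lookup g b0"
proof -
  define s1 where "s1 = Poly_Mapping.single a0 (Poly_Mapping.lookup f a0)"
  define s2 where "s2 = Poly_Mapping.single b0 (Poly_Mapping.lookup g b0)"
  define f1 where "f1 = f - s1"
  define g1 where "g1 = g - s2"
  have keys_s: "Poly_Mapping.keys s1 \<subseteq> Poly_Mapping.keys f" "Poly_Mapping.keys s2 \<subseteq> Poly_Mapping.keys g"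
    by (auto simp: s1_def s2_def in_keys_iff)
  have keys_f1: "Poly_Mapping.keys f1 \<subseteq> Poly_Mapping.keys f - {a0}"
    and keys_g1: "Poly_Mapping.keys g1 \<subseteq> Poly_Mapping.keys g - {b0}"
    by (auto simp: f1_def g1_def s1_def s2_def in_keys_iff lookup_minus lookup_single)
  have vanish: "Poly_Mapping.lookup (x * y) (a0 + b0) = 0"
    if "Poly_Mapping.keys x \<subseteq> Poly_Mapping.keys f" "Poly_Mapping.keys y \<subseteq> Poly_Mapping.keys g"
      "a0 \<notin> Poly_Mapping.keys x \<or> b0 \<notin> Poly_Mapping.keys y" for x y
  proof -
    have "a0 + b0 \<notin> Poly_Mapping.keys (x * y)"
    proof
      assume "a0 + b0 \<in> Poly_Mapping.keys (x * y)"
      then obtain a b where "a \<in> Poly_Mapping.keys x" "b \<in> Poly_Mapping.keys y" "a0 + b0 = a + b"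
        using keys_mult[of x y] by blast
      then show False using unique[of a b] that by auto
    qed
    then show ?thesis by (simp add: in_keys_iff)
  qed
  have "f * g = s1 * s2 + s1 * g1 + f1 * s2 + f1 * g1"
    by (simp add: f1_def g1_def algebra_simps)
  moreover have "Poly_Mapping.lookup (s1 * g1) (a0 + b0) = 0"
    by (rule vanish) (use keys_s keys_g1 in auto)
  moreover have "Poly_Mapping.lookup (f1 * s2) (a0 + b0) = 0"
    by (rule vanish) (use keys_s keys_f1 in auto)
  moreover have "Poly_Mapping.lookup (f1 * g1) (a0 + b0) = 0"
    by (rule vanish) (use keys_f1 keys_g1 in auto)
  ultimately show ?thesis
    by (simp add: lookup_add s1_def s2_def mult_single)
qed

lemma poly_mapping_sum_single: "f = (\<Sum>a\<in>Poly_Mapping.keys f. Poly_Mapping.single a (Poly_Mapping.lookup f a))"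
  by (rule poly_mapping_eqI) (simp add: lookup_sum lookup_single when_def sum.delta' in_keys_iff)

lemma mem_ideal_if_monomials_mem:
  fixes f :: "'a::comm_monoid_add \<Rightarrow>\<^sub>0 'k::comm_ring_1"
  assumes I: "is_ideal I" and monomials: "\<And>a. a \<in> Poly_Mapping.keys f \<Longrightarrow> Poly_Mapping.single a 1 \<in> I"
  shows "f \<in> I"
proof -
  have "(\<Sum>a\<in>Poly_Mapping.keys f. Poly_Mapping.single a (Poly_Mapping.lookup f a)) \<in> I"
  proof (rule ideal_sum_mem[OF I])
    fix a assume "a \<in> Poly_Mapping.keys f"
    then have "Poly_Mapping.single a 1 * Poly_Mapping.single 0 (Poly_Mapping.lookup f a) \<in> I"
      by (intro ideal_mult_right_mem[OF I] monomials)
    then show "Poly_Mapping.single a (Poly_Mapping.lookup f a) \<in> I"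
      by (simp add: mult_single)
  qed
  then show ?thesis
    by (subst poly_mapping_sum_single)
qed

lemma single_sum_one:
  "finite F \<Longrightarrow> Poly_Mapping.single (sum b F) (1::'k::comm_semiring_1) = (\<Prod>j\<in>F. Poly_Mapping.single (b j) 1)"
proof (induction F rule: finite_induct)
  case (insert j F)
  have "Poly_Mapping.single (b j + sum b F) (1::'k) = Poly_Mapping.single (b j) 1 * Poly_Mapping.single (sum b F) 1"
    by (simp add: mult_single)
  with insert show ?case by simp
qed simp

lemma var_power_add: "var_power v (m + n) = var_power v m * var_power v n"
  by (simp add: var_power_def single_add mult_single)

lemma var_power_mult: "var_power v (m * n) = var_power v m ^ n"
proof (induction n)
  case (Suc n)
  then show ?case by (simp add: var_power_add)
qed (simp add: var_power_def)

lemma monomial_eq_prod_var_power: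
  "Poly_Mapping.single a 1 = (\<Prod>v\<in>UNIV. var_power v (Poly_Mapping.lookup a v) :: ('n::finite, 'k::comm_ring_1) mpoly)"
proof -
  have "a = (\<Sum>v\<in>UNIV. Poly_Mapping.single v (Poly_Mapping.lookup a v))"
    by (rule poly_mapping_eqI) (simp add: lookup_sum lookup_single when_def)
  then have "Poly_Mapping.single a (1::'k) = Poly_Mapping.single (\<Sum>v\<in>UNIV. Poly_Mapping.single v (Poly_Mapping.lookup a v)) 1"
    by (rule arg_cong)
  also have "\<dots> = (\<Prod>v\<in>UNIV. Poly_Mapping.single (Poly_Mapping.single v (Poly_Mapping.lookup a v)) 1)"
    by (rule single_sum_one) simp
  finally show ?thesis by (simp add: var_power_def)
qed

definition rename_vars :: "('n \<Rightarrow> 'm) \<Rightarrow> ('n::finite \<Rightarrow>\<^sub>0 nat) \<Rightarrow> ('m \<Rightarrow>\<^sub>0 nat)" where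
  "rename_vars e a = (\<Sum>v\<in>UNIV. Poly_Mapping.single (e v) (Poly_Mapping.lookup a v))"

lemma rename_vars_add: "rename_vars e (a + b) = rename_vars e a + rename_vars e b"
  by (simp add: rename_vars_def lookup_add single_add sum.distrib)

lemma lookup_rename_vars: "inj e \<Longrightarrow> Poly_Mapping.lookup (rename_vars e a) (e w) = Poly_Mapping.lookup a w"
  by (simp add: rename_vars_def lookup_sum lookup_single when_def inj_eq)

lemma inj_rename_vars: "inj e \<Longrightarrow> inj (rename_vars e)"
  by (rule injI, rule poly_mapping_eqI) (metis lookup_rename_vars)

section \<open>Monomial valuations\<close>

locale monomial_weight =
  fixes \<omega> :: "'n::finite \<Rightarrow> rat"
  assumes var_weight_nonneg: "\<And>v. 0 \<le> \<omega> v"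
begin

definition weight :: "('n \<Rightarrow>\<^sub>0 nat) \<Rightarrow> rat" where
  "weight a = (\<Sum>v\<in>UNIV. of_nat (Poly_Mapping.lookup a v) * \<omega> v)"

lemma weight_add: "weight (a + b) = weight a + weight b"
  by (simp add: weight_def lookup_add sum.distrib distrib_right)

lemma weight_zero [simp]: "weight 0 = 0"
  by (simp add: weight_def)

lemma weight_nonneg: "0 \<le> weight a"
  by (simp add: weight_def sum_nonneg var_weight_nonneg)

lemma weight_sum: "weight (sum b F) = (\<Sum>j\<in>F. weight (b j))"
  by (induction F rule: infinite_finite_induct) (simp_all add: weight_add)

lemma weight_single: "weight (Poly_Mapping.single v n) = of_nat n * \<omega> v"
proof -
  have "weight (Poly_Mapping.single v n) = (\<Sum>w\<in>UNIV. if w = v then of_nat n * \<omega> v else 0)"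
    unfolding weight_def by (intro sum.cong) (auto simp: lookup_single when_def)
  then show ?thesis by simp
qed

definition weight_ge :: "rat \<Rightarrow> ('n, 'k::zero) mpoly set" where
  "weight_ge q = {f. \<forall>a\<in>Poly_Mapping.keys f. q \<le> weight a}"

text \<open>For f = 0 this is Min {}, an unspecified value.\<close>
definition min_weight :: "('n, 'k::zero) mpoly \<Rightarrow> rat" where
  "min_weight f = Min (weight ` Poly_Mapping.keys f)"

lemma weight_ge_zero: "weight_ge 0 = UNIV"
  by (auto simp: weight_ge_def weight_nonneg)

lemma weight_ge_antimono: "p \<le> q \<Longrightarrow> weight_ge q \<subseteq> weight_ge p"
  by (force simp: weight_ge_def)

lemma weight_ge_iff_min_weight: "f \<in> weight_ge q \<longleftrightarrow> f = 0 \<or> q \<le> min_weight f"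
  by (cases "f = 0") (simp_all add: weight_ge_def min_weight_def Min_ge_iff)

lemma mult_mem_weight_ge:
  "f \<in> weight_ge p \<Longrightarrow> g \<in> weight_ge q \<Longrightarrow> (f * g :: ('n, 'k::comm_ring_1) mpoly) \<in> weight_ge (p + q)"
  unfolding weight_ge_def using keys_mult[of f g] by (force simp: weight_add intro: add_mono)

lemma is_ideal_weight_ge: "is_ideal (weight_ge q :: ('n, 'k::comm_ring_1) mpoly set)"
  unfolding is_ideal_def
proof (intro conjI ballI allI)
  fix f g :: "('n, 'k) mpoly"
  assume "f \<in> weight_ge q" "g \<in> weight_ge q"
  then show "f + g \<in> weight_ge q"
    using keys_add[of f g] by (auto simp: weight_ge_def)
next
  fix f r :: "('n, 'k) mpoly"
  assume "f \<in> weight_ge q"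
  then show "r * f \<in> weight_ge q"
    using mult_mem_weight_ge[of r 0 f q] by (simp add: weight_ge_zero)
qed (simp add: weight_ge_def)

lemma ideal_pow_subset_weight_ge:
  assumes "A \<subseteq> (weight_ge q :: ('n, 'k::comm_ring_1) mpoly set)"
  shows "ideal_pow A k \<subseteq> weight_ge (of_nat k * q)"
proof (rule ideal_pow_subset_graded[where M = "\<lambda>k. weight_ge (of_nat k * q)"])
  show "a * b \<in> weight_ge (of_nat (Suc k) * q)" if "a \<in> A" "b \<in> weight_ge (of_nat k * q)" for a b k
  proof -
    have "a * b \<in> weight_ge (q + of_nat k * q)"
      using that assms by (intro mult_mem_weight_ge) auto
    then show ?thesis by (simp add: algebra_simps)
  qed
qed (simp_all add: weight_ge_zero is_ideal_weight_ge)

lemma lowest_weight_key_greatest: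
  fixes h :: "('n, 'k::zero) mpoly" and e :: "'n \<Rightarrow> nat"
  assumes "h \<noteq> 0"
  obtains a0 where "a0 \<in> Poly_Mapping.keys h" "weight a0 = min_weight h"
    "\<And>a. a \<in> Poly_Mapping.keys h \<Longrightarrow> weight a = min_weight h \<Longrightarrow> rename_vars e a \<le> rename_vars e a0"
proof -
  define S where "S = {a \<in> Poly_Mapping.keys h. weight a = min_weight h}"
  have "min_weight h \<in> weight ` Poly_Mapping.keys h"
    unfolding min_weight_def using assms by (intro Min_in) auto
  then have S: "finite S" "S \<noteq> {}" by (auto simp: S_def)
  then have "Max (rename_vars e ` S) \<in> rename_vars e ` S" by simp
  then obtain a0 where "a0 \<in> S" "rename_vars e a0 = Max (rename_vars e ` S)" by auto
  with S show ?thesis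
    by (intro that) (auto simp: S_def)
qed

text \<open>The lowest-weight terms of a product do not cancel: among the monomials of minimal weight
  in f and in g pick the largest ones a0 and b0 for a term order (obtained by renaming the
  variables into nat); then a0 + b0 arises from a single pair of monomials.\<close>
lemma lowest_weight_key_mult:
  fixes f g :: "('n, 'k::idom) mpoly"
  assumes "f \<noteq> 0" "g \<noteq> 0"
  obtains c where "c \<in> Poly_Mapping.keys (f * g)" "weight c = min_weight f + min_weight g"
proof -
  obtain e :: "'n \<Rightarrow> nat" where e: "inj e"
    using finite_imp_inj_to_nat_seg[of "UNIV :: 'n set"] by auto
  obtain a0 where a0: "a0 \<in> Poly_Mapping.keys f" "weight a0 = min_weight f"
    and a0_max: "\<And>a. a \<in> Poly_Mapping.keys f \<Longrightarrow> weight a = min_weight f \<Longrightarrow> rename_vars e a \<le> rename_vars e a0"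
    using lowest_weight_key_greatest[OF assms(1)] by blast
  obtain b0 where b0: "b0 \<in> Poly_Mapping.keys g" "weight b0 = min_weight g"
    and b0_max: "\<And>b. b \<in> Poly_Mapping.keys g \<Longrightarrow> weight b = min_weight g \<Longrightarrow> rename_vars e b \<le> rename_vars e b0"
    using lowest_weight_key_greatest[OF assms(2)] by blast
  have "a = a0 \<and> b = b0"
    if ab: "a \<in> Poly_Mapping.keys f" "b \<in> Poly_Mapping.keys g" "a + b = a0 + b0" for a b
  proof -
    have "min_weight f \<le> weight a" "min_weight g \<le> weight b"
      using ab(1,2) by (simp_all add: min_weight_def)
    moreover have "weight a + weight b = weight a0 + weight b0"
      using ab(3) by (metis weight_add)
    ultimately have "weight a = min_weight f" "weight b = min_weight g"
      using a0 b0 by linarith+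
    then have "rename_vars e a \<le> rename_vars e a0" "rename_vars e b \<le> rename_vars e b0"
      using ab a0_max b0_max by auto
    moreover have "rename_vars e a + rename_vars e b = rename_vars e a0 + rename_vars e b0"
      using ab(3) by (metis rename_vars_add)
    ultimately have "rename_vars e a = rename_vars e a0"
      by (metis add_less_le_mono order_less_irrefl order.not_eq_order_implies_strict)
    then have "a = a0" using inj_rename_vars[OF e] by (simp add: inj_eq)
    with ab(3) show ?thesis by simp
  qed
  then have "Poly_Mapping.lookup (f * g) (a0 + b0) = Poly_Mapping.lookup f a0 * Poly_Mapping.lookup g b0"
    by (intro lookup_mult_unique_decomposition) blast
  also have "\<dots> \<noteq> 0"
    using a0(1) b0(1) by (simp add: in_keys_iff)
  finally have "a0 + b0 \<in> Poly_Mapping.keys (f * g)" by (simp add: in_keys_iff)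
  moreover have "weight (a0 + b0) = min_weight f + min_weight g"
    using a0(2) b0(2) by (simp add: weight_add)
  ultimately show ?thesis by (rule that)
qed

lemma min_weight_mult:
  fixes f g :: "('n, 'k::idom) mpoly"
  assumes "f \<noteq> 0" "g \<noteq> 0"
  shows "f * g \<noteq> 0 \<and> min_weight (f * g) = min_weight f + min_weight g"
proof -
  obtain c where c: "c \<in> Poly_Mapping.keys (f * g)" "weight c = min_weight f + min_weight g"
    using lowest_weight_key_mult[OF assms] .
  then have "f * g \<noteq> 0" by auto
  moreover have "f * g \<in> weight_ge (min_weight f + min_weight g)"
    by (rule mult_mem_weight_ge) (simp_all add: weight_ge_iff_min_weight)
  moreover have "min_weight (f * g) \<le> weight c"
    unfolding min_weight_def using c(1) by simp
  ultimately show ?thesis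
    using c(2) by (simp add: weight_ge_iff_min_weight)
qed

lemma min_weight_power:
  fixes r :: "('n, 'k::idom) mpoly"
  assumes "r \<noteq> 0"
  shows "r ^ n \<noteq> 0 \<and> min_weight (r ^ n) = of_nat n * min_weight r"
proof (induction n)
  case 0
  show ?case by (simp add: min_weight_def keys_one)
next
  case (Suc n)
  then show ?case
    using min_weight_mult[OF assms, of "r ^ n"] by (simp add: algebra_simps)
qed

theorem integral_closure_subset_weight_ge:
  assumes "A \<subseteq> (weight_ge q :: ('n, 'k::idom) mpoly set)"
  shows "integral_closure A \<subseteq> weight_ge q"
proof
  fix r assume "r \<in> integral_closure A"
  then obtain K a where K: "K \<ge> 1" and a: "\<forall>i\<in>{1..K}. a i \<in> ideal_pow A i"
    and eq: "r ^ K + (\<Sum>i=1..K. a i * r ^ (K - i)) = 0"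
    unfolding integral_closure_def integral_over_ideal_def by blast
  show "r \<in> weight_ge q"
  proof (rule ccontr)
    assume "r \<notin> weight_ge q"
    then have r: "r \<noteq> 0" and less: "min_weight r < q"
      by (auto simp: weight_ge_iff_min_weight)
    define m where "m = min_weight r"
    \<comment> \<open>each a i r^(K-i) has weight at least i q + (K - i) m, which exceeds K m + (q - m)\<close>
    have "a i * r ^ (K - i) \<in> weight_ge (of_nat K * m + (q - m))" if i: "i \<in> {1..K}" for i
    proof -
      have "a i \<in> weight_ge (of_nat i * q)"
        using a i ideal_pow_subset_weight_ge[OF assms] by blast
      moreover have "r ^ (K - i) \<in> weight_ge (of_nat (K - i) * m)"
        using min_weight_power[OF r] by (simp add: weight_ge_iff_min_weight m_def)
      ultimately have "a i * r ^ (K - i) \<in> weight_ge (of_nat i * q + of_nat (K - i) * m)"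
        by (rule mult_mem_weight_ge)
      moreover have "of_nat K * m + (q - m) \<le> of_nat i * q + of_nat (K - i) * m"
      proof -
        have "(q - m) * 1 \<le> (q - m) * of_nat i"
          using i less by (intro mult_left_mono) (auto simp: m_def)
        then show ?thesis using i by (simp add: of_nat_diff algebra_simps)
      qed
      ultimately show ?thesis using weight_ge_antimono by blast
    qed
    then have "- (\<Sum>i=1..K. a i * r ^ (K - i)) \<in> weight_ge (of_nat K * m + (q - m))"
      by (intro ideal_uminus_mem[OF is_ideal_weight_ge] ideal_sum_mem[OF is_ideal_weight_ge])
    moreover have "r ^ K = - (\<Sum>i=1..K. a i * r ^ (K - i))"
      using eq by (simp add: eq_neg_iff_add_eq_0)
    ultimately show False
      using min_weight_power[OF r, of K] less by (simp add: weight_ge_iff_min_weight m_def)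
  qed
qed

end

section \<open>The weights 1/\<lambda>_v and the ideal I(\<lambda>)\<close>

locale lambda_weight =
  fixes lam :: "'n::finite \<Rightarrow> nat"
  assumes lam_pos: "\<And>v. 0 < lam v"

sublocale lambda_weight \<subseteq> monomial_weight "\<lambda>v. 1 / of_nat (lam v)"
  by unfold_locales simp

context lambda_weight
begin

lemma weight_single_lam: "weight (Poly_Mapping.single v (lam v)) = 1"
  using lam_pos[of v] by (simp add: weight_single)

lemma weight_eq_0_iff: "weight a = 0 \<longleftrightarrow> a = 0"
proof
  assume "weight a = 0"
  then have "\<forall>v\<in>UNIV. of_nat (Poly_Mapping.lookup a v) * (1 / of_nat (lam v)) = (0::rat)"
    unfolding weight_def by (subst sum_nonneg_eq_0_iff[symmetric]) auto
  then have "Poly_Mapping.lookup a v = 0" for v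
    using lam_pos[of v] by auto
  then show "a = 0"
    by (intro poly_mapping_eqI) simp
qed simp

lemma Lambda_monoid_eq_range_weight: "Lambda_monoid lam = range weight"
proof -
  have weight_eq: "weight a = (\<Sum>v\<in>UNIV. of_nat (Poly_Mapping.lookup a v) / of_nat (lam v))" for a
    by (simp add: weight_def)
  show ?thesis
    unfolding Lambda_monoid_def
  proof (intro set_eqI iffI)
    fix x :: rat assume "x \<in> {\<Sum>v\<in>UNIV. of_nat (c v) / of_nat (lam v) |c. True}"
    then obtain c where "x = (\<Sum>v\<in>UNIV. of_nat (c v) / of_nat (lam v))" by blast
    then have "x = weight (Abs_poly_mapping c)" by (simp add: weight_eq)
    then show "x \<in> range weight" by blast
  qed (auto simp: weight_eq)
qed

definition splits :: "nat \<Rightarrow> ('n \<Rightarrow>\<^sub>0 nat) \<Rightarrow> bool" where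
  "splits k a \<longleftrightarrow> (\<exists>b d. (\<forall>j<k. 1 \<le> weight (b j)) \<and> a = (\<Sum>j<k. b j) + d)"

lemma splits_0: "splits 0 a"
  unfolding splits_def by (intro exI[of _ "\<lambda>_. 0"] exI[of _ a]) simp

lemma splits_add: "splits k a \<Longrightarrow> splits k (a + e)"
  unfolding splits_def by (metis add.assoc)

lemma splits_Suc:
  assumes "1 \<le> weight e" and "splits k a"
  shows "splits (Suc k) (e + a)"
proof -
  obtain b d where b: "\<forall>j<k. 1 \<le> weight (b j)" and a: "a = (\<Sum>j<k. b j) + d"
    using assms(2) unfolding splits_def by blast
  have "\<forall>j<Suc k. 1 \<le> weight ((b(k := e)) j)"
    using b assms(1) by (simp add: less_Suc_eq)
  moreover have "e + a = (\<Sum>j<Suc k. (b(k := e)) j) + d"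
    using a by (simp add: algebra_simps)
  ultimately show ?thesis
    unfolding splits_def by blast
qed

lemma quasinormal_if_splits:
  assumes "\<And>k a. of_nat k \<le> weight a \<Longrightarrow> splits k a"
  shows "quasinormal (Lambda_monoid lam)"
  unfolding quasinormal_def Lambda_monoid_eq_range_weight
proof (intro ballI allI impI)
  fix x p assume "x \<in> range weight" and p: "(1::nat) \<le> p" and "of_nat p \<le> x"
  then obtain a where a: "x = weight a" and "of_nat p \<le> weight a" by auto
  then obtain b d where b: "\<forall>j<p. 1 \<le> weight (b j)" and ad: "a = (\<Sum>j<p. b j) + d"
    using assms unfolding splits_def by blast
  obtain p' where p': "p = Suc p'" using p by (cases p) auto
  \<comment> \<open>the remainder d is absorbed by the last summand\<close>
  define y where "y j = weight (if j = p' then b j + d else b j)" for j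
  have "\<forall>i<p. y i \<in> range weight \<and> 1 \<le> y i"
    using b weight_nonneg by (auto simp: y_def weight_add p' add_increasing2)
  moreover have "x = (\<Sum>i<p. y i)"
    using a ad by (simp add: y_def p' weight_add weight_sum)
  ultimately show "\<exists>y. (\<forall>i<p. y i \<in> range weight \<and> 1 \<le> y i) \<and> x = (\<Sum>i<p. y i)"
    by blast
qed

lemma I_lambda_subset_weight_ge: "(I_lambda lam :: ('n, 'k::idom) mpoly set) \<subseteq> weight_ge 1"
  unfolding I_lambda_def
proof (intro integral_closure_subset_weight_ge ideal_gen_least[OF is_ideal_weight_ge])
  show "range (\<lambda>v. var_power v (lam v)) \<subseteq> (weight_ge 1 :: ('n, 'k) mpoly set)"
    by (auto simp: weight_ge_def var_power_def weight_single_lam)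
qed

lemma monomial_power_mem_ideal_pow:
  fixes B :: "('n, 'k::comm_ring_1) mpoly set"
  assumes gens: "\<And>v. var_power v (lam v) \<in> B" and "of_nat p \<le> weight a"
  defines "L \<equiv> \<Prod>v\<in>UNIV. lam v"
  shows "Poly_Mapping.single a 1 ^ L \<in> ideal_pow B (p * L)"
proof -
  define c where "c v = Poly_Mapping.lookup a v * (L div lam v)" for v
  have lam_c: "Poly_Mapping.lookup a v * L = lam v * c v" for v
    unfolding c_def L_def by (simp add: dvd_prodI)
  have "Poly_Mapping.single a 1 ^ L = (\<Prod>v\<in>UNIV. var_power v (Poly_Mapping.lookup a v) ^ L :: ('n, 'k) mpoly)"
    by (simp add: monomial_eq_prod_var_power prod_power_distrib)
  also have "\<dots> = (\<Prod>v\<in>UNIV. var_power v (lam v) ^ c v)"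
    by (simp add: var_power_mult[symmetric] lam_c)
  also have "\<dots> \<in> ideal_pow B (\<Sum>v\<in>UNIV. c v)"
    by (intro prod_mem_ideal_pow power_mem_ideal_pow gens) simp
  also have "\<dots> \<subseteq> ideal_pow B (p * L)"
  proof (rule ideal_pow_antimono)
    have "of_nat (c v) = of_nat L * (of_nat (Poly_Mapping.lookup a v) * (1 / of_nat (lam v)) :: rat)" for v
      using lam_c[of v] lam_pos[of v] by (simp add: field_simps flip: of_nat_mult)
    then have "of_nat (\<Sum>v\<in>UNIV. c v) = of_nat L * weight a"
      by (simp add: weight_def sum_distrib_left)
    moreover have "of_nat (p * L) = (of_nat L * of_nat p :: rat)"
      by simp
    moreover have "of_nat L * of_nat p \<le> of_nat L * weight a"
      using assms(2) by (intro mult_left_mono) auto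
    ultimately have "(of_nat (p * L) :: rat) \<le> of_nat (\<Sum>v\<in>UNIV. c v)"
      by linarith
    then show "p * L \<le> (\<Sum>v\<in>UNIV. c v)"
      by (simp only: of_nat_le_iff)
  qed
  finally show ?thesis .
qed

lemma prod_lam_ge_1: "1 \<le> (\<Prod>v\<in>UNIV. lam v)"
  using lam_pos by (simp add: Suc_le_eq prod_pos)

lemma monomial_mem_I_lambda:
  assumes "1 \<le> weight a"
  shows "Poly_Mapping.single a 1 \<in> (I_lambda lam :: ('n, 'k::comm_ring_1) mpoly set)"
proof -
  have "Poly_Mapping.single a 1 ^ (\<Prod>v\<in>UNIV. lam v)
      \<in> ideal_pow (ideal_gen (range (\<lambda>v. var_power v (lam v))) :: ('n, 'k) mpoly set) (1 * (\<Prod>v\<in>UNIV. lam v))"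
    using assms by (intro monomial_power_mem_ideal_pow) (auto intro: subsetD[OF ideal_gen_superset])
  then show ?thesis
    unfolding I_lambda_def integral_closure_def
    using prod_lam_ge_1 by (auto intro: integral_over_ideal_if_power_mem)
qed

lemma monomial_mem_integral_closure_pow:
  assumes "of_nat k \<le> weight a"
  shows "Poly_Mapping.single a 1 \<in> integral_closure (ideal_pow (I_lambda lam :: ('n, 'k::comm_ring_1) mpoly set) k)"
proof -
  have "var_power v (lam v) \<in> (I_lambda lam :: ('n, 'k) mpoly set)" for v
    unfolding I_lambda_def
    by (intro subsetD[OF integral_closure_superset] subsetD[OF ideal_gen_superset]) simp
  then have "Poly_Mapping.single a 1 ^ (\<Prod>v\<in>UNIV. lam v)
      \<in> ideal_pow (I_lambda lam :: ('n, 'k) mpoly set) (k * (\<Prod>v\<in>UNIV. lam v))"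
    using assms by (rule monomial_power_mem_ideal_pow)
  also have "\<dots> \<subseteq> ideal_pow (ideal_pow (I_lambda lam) k) (\<Prod>v\<in>UNIV. lam v)"
    by (rule ideal_pow_mult_subset)
  finally show ?thesis
    unfolding integral_closure_def
    using prod_lam_ge_1 by (auto intro: integral_over_ideal_if_power_mem)
qed

lemma splits_if_mem_ideal_pow:
  assumes "f \<in> ideal_pow (I_lambda lam :: ('n, 'k::idom) mpoly set) k"
  shows "\<forall>a\<in>Poly_Mapping.keys f. splits k a"
proof -
  let ?M = "\<lambda>k. {f :: ('n, 'k) mpoly. \<forall>a\<in>Poly_Mapping.keys f. splits k a}"
  have "ideal_pow (I_lambda lam) k \<subseteq> ?M k"
  proof (rule ideal_pow_subset_graded)
    show "?M 0 = UNIV" by (simp add: splits_0)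
    show "is_ideal (?M k)" for k
      unfolding is_ideal_def
    proof (intro conjI ballI allI)
      fix f g r :: "('n, 'k) mpoly" assume f: "f \<in> ?M k"
      show "r * f \<in> ?M k"
        using f keys_mult[of r f] splits_add by (fastforce simp: add.commute)
      assume "g \<in> ?M k"
      then show "f + g \<in> ?M k"
        using f keys_add[of f g] by blast
    qed simp
    show "f * g \<in> ?M (Suc k)" if "f \<in> I_lambda lam" "g \<in> ?M k" for f g k
    proof -
      have "\<forall>u\<in>Poly_Mapping.keys f. 1 \<le> weight u"
        using that(1) I_lambda_subset_weight_ge by (auto simp: weight_ge_def)
      then show ?thesis
        using that(2) keys_mult[of f g] splits_Suc by fastforce
    qed
  qed
  with assms show ?thesis by blast
qed

lemma monomial_mem_ideal_pow_iff_splits: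
  "Poly_Mapping.single a 1 \<in> ideal_pow (I_lambda lam :: ('n, 'k::idom) mpoly set) k \<longleftrightarrow> splits k a"
proof
  assume "Poly_Mapping.single a 1 \<in> ideal_pow (I_lambda lam :: ('n, 'k) mpoly set) k"
  then show "splits k a"
    using splits_if_mem_ideal_pow by fastforce
next
  assume "splits k a"
  then obtain b d where b: "\<forall>j<k. 1 \<le> weight (b j)" and a: "a = (\<Sum>j<k. b j) + d"
    unfolding splits_def by blast
  have "Poly_Mapping.single (b j) 1 \<in> ideal_pow (I_lambda lam :: ('n, 'k) mpoly set) 1" if "j < k" for j
    using b that by (intro subsetD[OF ideal_pow_one_superset] monomial_mem_I_lambda) auto
  then have "(\<Prod>j<k. Poly_Mapping.single (b j) 1) \<in> ideal_pow (I_lambda lam :: ('n, 'k) mpoly set) (\<Sum>j<k. 1)"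
    by (intro prod_mem_ideal_pow) auto
  moreover have "Poly_Mapping.single a (1::'k) = (\<Prod>j<k. Poly_Mapping.single (b j) 1) * Poly_Mapping.single d 1"
    by (simp add: a mult_single flip: single_sum_one)
  ultimately show "Poly_Mapping.single a 1 \<in> ideal_pow (I_lambda lam :: ('n, 'k) mpoly set) k"
    by (simp add: ideal_mult_right_mem[OF is_ideal_ideal_pow])
qed

lemma weight_ge_subset_ideal_pow:
  assumes "\<And>a. of_nat k \<le> weight a \<Longrightarrow> splits k a"
  shows "weight_ge (of_nat k) \<subseteq> ideal_pow (I_lambda lam :: ('n, 'k::idom) mpoly set) k"
proof
  fix f :: "('n, 'k) mpoly" assume f: "f \<in> weight_ge (of_nat k)"
  show "f \<in> ideal_pow (I_lambda lam) k"
  proof (rule mem_ideal_if_monomials_mem[OF is_ideal_ideal_pow])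
    fix a assume "a \<in> Poly_Mapping.keys f"
    then have "of_nat k \<le> weight a"
      using f by (simp add: weight_ge_def)
    then show "Poly_Mapping.single a 1 \<in> ideal_pow (I_lambda lam :: ('n, 'k) mpoly set) k"
      by (simp add: assms monomial_mem_ideal_pow_iff_splits)
  qed
qed

theorem normal_iff_splits:
  "normal_ideal (I_lambda lam :: ('n, 'k::idom) mpoly set) \<longleftrightarrow> (\<forall>k a. of_nat k \<le> weight a \<longrightarrow> splits k a)"
proof (intro iffI allI impI)
  fix k a assume normal: "normal_ideal (I_lambda lam :: ('n, 'k) mpoly set)" and "of_nat k \<le> weight a"
  show "splits k a"
  proof (cases "k = 0")
    case False
    have "Poly_Mapping.single a 1 \<in> integral_closure (ideal_pow (I_lambda lam :: ('n, 'k) mpoly set) k)"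
      using \<open>of_nat k \<le> weight a\<close> by (rule monomial_mem_integral_closure_pow)
    also have "\<dots> = ideal_pow (I_lambda lam) k"
      using normal False by (simp add: normal_ideal_def integrally_closed_def)
    finally show ?thesis
      by (simp add: monomial_mem_ideal_pow_iff_splits)
  qed (simp add: splits_0)
next
  assume splits: "\<forall>k a. of_nat k \<le> weight a \<longrightarrow> splits k a"
  show "normal_ideal (I_lambda lam :: ('n, 'k) mpoly set)"
    unfolding normal_ideal_def integrally_closed_def
  proof (intro allI impI equalityI)
    fix k :: nat
    have "integral_closure (ideal_pow (I_lambda lam :: ('n, 'k) mpoly set) k) \<subseteq> weight_ge (of_nat k * 1)"
      by (intro integral_closure_subset_weight_ge ideal_pow_subset_weight_ge I_lambda_subset_weight_ge)
    also have "\<dots> \<subseteq> ideal_pow (I_lambda lam) k"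
      using splits weight_ge_subset_ideal_pow by simp
    finally show "integral_closure (ideal_pow (I_lambda lam :: ('n, 'k) mpoly set) k) \<subseteq> ideal_pow (I_lambda lam) k" .
  qed (rule integral_closure_superset)
qed

end

locale coprime_lambda_weight = lambda_weight +
  assumes lam_coprime: "\<And>v w. v \<noteq> w \<Longrightarrow> coprime (lam v) (lam w)"
begin

lemma cong_lookup_if_weight_eq:
  assumes "weight a = weight b"
  shows "[Poly_Mapping.lookup a u = Poly_Mapping.lookup b u] (mod lam u)"
proof -
  define P where "P v = (\<Prod>w\<in>UNIV - {v}. lam w)" for v
  have scaled: "of_nat (\<Prod>w\<in>UNIV. lam w) * weight c
      = of_nat (\<Sum>v\<in>UNIV. Poly_Mapping.lookup c v * P v)" for c
  proof -
    have "of_nat (\<Prod>w\<in>UNIV. lam w) * (of_nat (Poly_Mapping.lookup c v) * (1 / of_nat (lam v)))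
        = (of_nat (Poly_Mapping.lookup c v * P v) :: rat)" for v
      using lam_pos[of v] by (simp add: P_def prod.remove[of UNIV v] field_simps)
    then show ?thesis
      by (simp add: weight_def sum_distrib_left)
  qed
  have "[(\<Sum>v\<in>UNIV. Poly_Mapping.lookup c v * P v) = Poly_Mapping.lookup c u * P u] (mod lam u)" for c
  proof -
    have "[(\<Sum>v\<in>UNIV. Poly_Mapping.lookup c v * P v)
        = (\<Sum>v\<in>UNIV. if v = u then Poly_Mapping.lookup c u * P u else 0)] (mod lam u)"
      by (rule cong_sum) (auto simp: P_def cong_0_iff intro!: dvd_mult dvd_prodI)
    then show ?thesis by simp
  qed
  moreover have "(\<Sum>v\<in>UNIV. Poly_Mapping.lookup a v * P v) = (\<Sum>v\<in>UNIV. Poly_Mapping.lookup b v * P v)"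
    using scaled[of a] scaled[of b] assms by (simp only: of_nat_eq_iff)
  ultimately have "[Poly_Mapping.lookup a u * P u = Poly_Mapping.lookup b u * P u] (mod lam u)"
    by (metis cong_sym cong_trans)
  moreover have "coprime (P u) (lam u)"
    unfolding P_def by (rule prod_coprime_left) (use lam_coprime in auto)
  ultimately show ?thesis
    by (simp add: cong_mult_rcancel_nat)
qed

lemma eq_if_weight_eq_reduced:
  assumes reduced: "\<And>u. Poly_Mapping.lookup a u < lam u" and eq: "weight c = weight a"
  shows "c = a"
proof -
  have le: "Poly_Mapping.lookup a u \<le> Poly_Mapping.lookup c u" for u
  proof -
    have "Poly_Mapping.lookup a u = Poly_Mapping.lookup c u mod lam u"
      using cong_lookup_if_weight_eq[OF eq, of u] reduced[of u] by (simp add: cong_def)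
    then show ?thesis by simp
  qed
  have "c = a + (c - a)"
    by (rule poly_mapping_eqI) (simp add: lookup_add lookup_minus le)
  then have "weight (c - a) = 0"
    using eq weight_add[of a "c - a"] by simp
  then have "c - a = 0" by (simp add: weight_eq_0_iff)
  with \<open>c = a + (c - a)\<close> show ?thesis by simp
qed

lemma splits_if_reduced:
  assumes qn: "quasinormal (Lambda_monoid lam)" and reduced: "\<And>u. Poly_Mapping.lookup a u < lam u"
    and "1 \<le> k" "of_nat k \<le> weight a"
  shows "splits k a"
proof -
  have "\<forall>p::nat. 1 \<le> p \<longrightarrow> of_nat p \<le> weight a \<longrightarrow>
      (\<exists>y. (\<forall>i<p. y i \<in> range weight \<and> 1 \<le> y i) \<and> weight a = (\<Sum>i<p. y i))"
    using qn unfolding quasinormal_def Lambda_monoid_eq_range_weight by blast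
  from this[rule_format, OF assms(3,4)]
  obtain y where y: "\<forall>i<k. y i \<in> range weight \<and> 1 \<le> y i" and sum_y: "weight a = (\<Sum>i<k. y i)"
    by auto
  define b where "b i = inv weight (y i)" for i
  have b: "y i = weight (b i)" if "i < k" for i
    using y that f_inv_into_f[of "y i" weight UNIV] by (simp add: b_def)
  have "weight (\<Sum>i<k. b i) = weight a"
    using sum_y b by (simp add: weight_sum)
  then have "a = (\<Sum>i<k. b i) + 0"
    using eq_if_weight_eq_reduced[OF reduced] by (metis add_0_right)
  moreover have "\<forall>i<k. 1 \<le> weight (b i)"
    using y b by auto
  ultimately show ?thesis
    unfolding splits_def by blast
qed

lemma splits_if_quasinormal:
  assumes qn: "quasinormal (Lambda_monoid lam)"
  shows "of_nat k \<le> weight a \<Longrightarrow> splits k a"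
proof (induction k arbitrary: a)
  case 0
  show ?case by (rule splits_0)
next
  case (Suc k)
  show ?case
  proof (cases "\<exists>v. lam v \<le> Poly_Mapping.lookup a v")
    case True
    then obtain v where v: "lam v \<le> Poly_Mapping.lookup a v" by blast
    define a' where "a' = a - Poly_Mapping.single v (lam v)"
    have a: "a = Poly_Mapping.single v (lam v) + a'"
      by (rule poly_mapping_eqI) (use v in \<open>auto simp: a'_def lookup_add lookup_minus lookup_single when_def\<close>)
    then have "weight a = 1 + weight a'"
      by (simp add: weight_add weight_single_lam)
    then have "splits k a'"
      using Suc by simp
    then show ?thesis
      by (subst a) (intro splits_Suc, simp add: weight_single_lam)
  next
    case False
    then show ?thesis
      using splits_if_reduced[OF qn] Suc.prems by (simp add: not_le)
  qed
qed

theorem quasinormal_iff_splits: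
  "quasinormal (Lambda_monoid lam) \<longleftrightarrow> (\<forall>k a. of_nat k \<le> weight a \<longrightarrow> splits k a)"
  using splits_if_quasinormal quasinormal_if_splits by blast

end

theorem proposition4p7:
  fixes lam :: "'n::finite \<Rightarrow> nat"
  assumes pos: "\<And>v. lam v > 0"
    and coprime: "\<And>v w. v \<noteq> w \<Longrightarrow> coprime (lam v) (lam w)"
  shows "normal_ideal (I_lambda lam :: ('n, 'k::field) mpoly set)
         \<longleftrightarrow> quasinormal (Lambda_monoid lam)"
proof -
  interpret coprime_lambda_weight lam
    using pos coprime by unfold_locales
  show ?thesis
    by (simp only: normal_iff_splits quasinormal_iff_splits)
qed

end
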